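(* There is a constant $C$ such that for all $\varepsilon\in(0,1]$, all $\Gamma\in\mathbb{R}$ and all smooth $\alpha:\mathbb{T}\to\mathbb{T}$ with $\eta:=\|\alpha'\|_\infty\le1$, setting $\gamma^0(r)=(0,\alpha(r),r)$ and $$\mathbf{v}^0(\mathbf{x})=\Gamma\int_{\mathbb{T}}\mathbf{k}^\varepsilon(\mathbf{x}-\gamma^0(r))\times\partial_r\gamma^0(r)\,dr,$$ one has $$\sup_{r\in\mathbb{T}}\big|v_1^0(\gamma^0(r))\big|\le C|\Gamma|\eta\varepsilon^{-1},\qquad \sup_{\mathbf{x}\in\mathbb{T}^3}\big|\partial_3\mathbf{v}^0(\mathbf{x})\big|\le C|\Gamma|\eta\varepsilon^{-2}.$$
   Context: $\mathbb{T}^3=\mathbb{R}^3/\mathbb{Z}^3$, identified with $[-\tfrac12,\tfrac12)^3$. The regularized Biot–Savart kernel is $\mathbf{k}^\varepsilon(\mathbf{x})=\frac{1}{4\pi}\frac{\mathbf{x}}{(|\mathbf{x}|^2+\varepsilon^2)^{3/2}}+\mathbf{h}^\varepsilon(\mathbf{x})$, where $\mathbf{h}^\varepsilon$ is a smooth correction making $\mathbf{k}^\varepsilon$ periodic, with $\mathbf{h}^\varepsilon$ and $\nabla\mathbf{h}^\varepsilon$ bounded uniformly in $\varepsilon$, and each component $k_i^\varepsilon$ is odd in $x_i$ and even in the other two coordinates. $\times$ is the vector cross product in $\mathbb{R}^3$. *)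

theory Defs
  imports "HOL-Analysis.Analysis"
begin

text \<open>C-infinity smoothness (greatest fixed point: differentiable everywhere, and
  the derivative is again smooth).\<close>
coinductive smooth1 :: "(real \<Rightarrow> real) \<Rightarrow> bool" where
  "(\<forall>x. f differentiable at x) \<Longrightarrow> smooth1 (deriv f) \<Longrightarrow> smooth1 f"

coinductive smooth3 :: "(real^3 \<Rightarrow> real^3) \<Rightarrow> bool" where
  "(\<forall>x. f differentiable at x) \<Longrightarrow>
   (\<forall>i. smooth3 (\<lambda>x. frechet_derivative f (at x) (axis i 1))) \<Longrightarrow> smooth3 f"

definition fund_box :: "(real^3) set" where
  "fund_box = {x. \<forall>i. -1/2 \<le> x$i \<and> x$i < 1/2}"

text \<open>Singular (regularized) part of the Biot--Savart kernel.\<close>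
definition bs_main :: "real \<Rightarrow> real^3 \<Rightarrow> real^3" where
  "bs_main \<epsilon> x = (1 / (4 * pi * (norm x ^ 2 + \<epsilon> ^ 2) powr (3/2))) *\<^sub>R x"

definition refl3 :: "3 \<Rightarrow> real^3 \<Rightarrow> real^3" where
  "refl3 j x = (\<chi> l. if l = j then - (x$l) else x$l)"

text \<open>Admissible regularized periodic Biot--Savart kernel family k^\<epsilon>:
  smooth, Z^3-periodic, equal on the fundamental domain to the regularized kernel
  plus a correction h^\<epsilon> = k^\<epsilon> - bs_main \<epsilon> which, together with its partial
  derivatives, is bounded uniformly in \<epsilon>; k_i odd in x_i, even in the others.\<close>
definition admissible_kernel :: "(real \<Rightarrow> real^3 \<Rightarrow> real^3) \<Rightarrow> bool" where
  "admissible_kernel k \<longleftrightarrow>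
     (\<forall>\<epsilon>>0. smooth3 (k \<epsilon>)) \<and>
     (\<forall>\<epsilon>>0. \<forall>x i. k \<epsilon> (x + axis i 1) = k \<epsilon> x) \<and>
     (\<exists>M. \<forall>\<epsilon>>0. \<forall>x\<in>fund_box.
          norm (k \<epsilon> x - bs_main \<epsilon> x) \<le> M \<and>
          (\<forall>i. norm (frechet_derivative (\<lambda>y. k \<epsilon> y - bs_main \<epsilon> y) (at x) (axis i 1)) \<le> M)) \<and>
     (\<forall>\<epsilon>>0. \<forall>x i j. k \<epsilon> (refl3 j x) $ i = (if i = j then -1 else 1) * (k \<epsilon> x $ i))"

definition gamma0 :: "(real \<Rightarrow> real) \<Rightarrow> real \<Rightarrow> real^3" where
  "gamma0 \<alpha> r = vector [0, \<alpha> r, r]"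

definition vel0 :: "(real \<Rightarrow> real^3 \<Rightarrow> real^3) \<Rightarrow> real \<Rightarrow> real \<Rightarrow> (real \<Rightarrow> real) \<Rightarrow> real^3 \<Rightarrow> real^3" where
  "vel0 k \<epsilon> \<Gamma> \<alpha> x = \<Gamma> *\<^sub>R integral {0..1}
      (\<lambda>r. cross3 (k \<epsilon> (x - gamma0 \<alpha> r)) (vector [0, deriv \<alpha> r, 1]))"

end

theory Submission
  imports Defs
begin

(*
  Both integrands are periodic in r, so each integral may be taken over a period centred at the
  point of interest. There the third coordinate s of x - \<gamma>\<^sup>0(r) satisfies |s| \<le> 1/2, the kernel
  and its first derivatives are bounded by M + 1/(s\<^sup>2+\<epsilon>\<^sup>2) and M + (s\<^sup>2+\<epsilon>\<^sup>2)\<^sup>-\<^sup>3\<^sup>/\<^sup>2, and the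
  integral of 1/(s\<^sup>2+\<epsilon>\<^sup>2) over the period is at most \<pi>/\<epsilon>.

  On the curve the first component of k \<times> \<partial>\<gamma>\<^sup>0 is k\<^sub>2 - \<alpha>' k\<^sub>3 at (0, \<alpha>(r\<^sub>0) - \<alpha>(r), s).
  As k\<^sub>2 is odd in x\<^sub>2 it vanishes for x\<^sub>2 = 0, hence |k\<^sub>2| \<le> \<eta>|s| sup|\<partial>\<^sub>2 k| \<le> \<eta>(M + 1/(s\<^sup>2+\<epsilon>\<^sup>2)).

  For \<partial>\<^sub>3 v one adds (d/dr k(x - \<gamma>\<^sup>0(r))) \<times> e\<^sub>3 = -(\<alpha>' \<partial>\<^sub>2 k + \<partial>\<^sub>3 k) \<times> e\<^sub>3, whose integral
  over a period vanishes. This turns \<partial>\<^sub>3 k \<times> (\<alpha>' e\<^sub>2 + e\<^sub>3) into \<alpha>' (\<partial>\<^sub>3 k \<times> e\<^sub>2 - \<partial>\<^sub>2 k \<times> e\<^sub>3),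
  which carries the factor \<eta>.
*)

lemma vec3_eq_iff: "(x::real^3) = y \<longleftrightarrow> x$1 = y$1 \<and> x$2 = y$2 \<and> x$3 = y$3"
  by (simp add: vec_eq_iff forall_3)

lemma vector3_eq_axis:
  "(vector [a, b, c] :: real^3) = a *\<^sub>R axis 1 1 + b *\<^sub>R axis 2 1 + c *\<^sub>R axis 3 1"
  by (simp add: vec3_eq_iff axis_def)

lemma norm_cross3_le: "norm (cross3 x y) \<le> norm x * norm y"
proof -
  have "(norm (cross3 x y))\<^sup>2 \<le> (norm x * norm y)\<^sup>2"
    using norm_cross_dot[of x y] by (metis le_add_same_cancel1 zero_le_power2)
  then show ?thesis by (simp add: power2_le_iff_abs_le)
qed

lemma bounded_linear_cross3_left: "bounded_linear (\<lambda>v. cross3 v c)"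
  using bilinear_cross bilinear_conv_bounded_bilinear bounded_bilinear.bounded_linear_left by blast

lemma periodic_add_of_int_scaleR:
  fixes v :: "'a::real_vector"
  assumes "\<And>x. f (x + v) = f x"
  shows "f (x + of_int n *\<^sub>R v) = f x"
proof -
  have nat: "f (y + of_nat m *\<^sub>R v) = f y" for y m
  proof (induction m)
    case (Suc m)
    have "y + of_nat (Suc m) *\<^sub>R v = (y + of_nat m *\<^sub>R v) + v"
      by (simp add: scaleR_add_left algebra_simps)
    then show ?case using Suc assms by metis
  qed simp
  show ?thesis
  proof (cases n rule: int_cases)
    case (neg m)
    then have "x + of_int n *\<^sub>R v + of_nat (Suc m) *\<^sub>R v = x"
      by (simp add: add.assoc flip: scaleR_add_left)
    then show ?thesis using nat[of "x + of_int n *\<^sub>R v" "Suc m"] by metis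
  qed (simp add: nat)
qed

lemma periodic_add_lattice:
  fixes f :: "real^3 \<Rightarrow> 'b"
  assumes "\<And>x i. f (x + axis i 1) = f x"
  shows "f (x + vector [of_int a, of_int b, of_int c]) = f x"
proof -
  have "x + vector [of_int a, of_int b, of_int c] =
     ((x + of_int a *\<^sub>R axis 1 1) + of_int b *\<^sub>R axis 2 1) + of_int c *\<^sub>R axis 3 1"
    by (simp add: vector3_eq_axis algebra_simps)
  then show ?thesis by (simp only: periodic_add_of_int_scaleR[of f "axis _ 1", OF assms])
qed

lemma frechet_derivative_periodic:
  assumes "\<And>z. f (z + p) = f z" and "f differentiable at (y + p)"
  shows "frechet_derivative f (at y) = frechet_derivative f (at (y + p))"
proof -
  have "((\<lambda>z. f (z + p)) has_derivative frechet_derivative f (at (y + p))) (at y)"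
    using assms(2) unfolding frechet_derivative_works
    by (rule has_derivative_compose[of "\<lambda>z. z + p" "\<lambda>h. h", unfolded o_def, rotated])
       (auto intro!: derivative_eq_intros)
  then have "(f has_derivative frechet_derivative f (at (y + p))) (at y)"
    using assms(1) by simp
  then show ?thesis by (rule frechet_derivative_at[symmetric])
qed

lemma frechet_derivative_diff:
  assumes "f differentiable at x" "g differentiable at x"
  shows "frechet_derivative (\<lambda>y. f y - g y) (at x) =
    (\<lambda>h. frechet_derivative f (at x) h - frechet_derivative g (at x) h)"
  using assms by (intro frechet_derivative_at[symmetric] has_derivative_diff)
    (simp_all add: frechet_derivative_works[symmetric])

lemma integral_periodic_shift:
  fixes f :: "real \<Rightarrow> 'a::banach"
  assumes cont: "continuous_on UNIV f" and per: "\<And>x. f (x + 1) = f x"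
  shows "integral {a..a+1} f = integral {0..1} f"
proof -
  define n where "n = \<lfloor>a\<rfloor>"
  define t where "t = a - of_int n"
  have t: "0 \<le> t" "t \<le> 1" unfolding t_def n_def
    using of_int_floor_le[of a] real_of_int_floor_add_one_gt[of a] by linarith+
  have int: "f integrable_on {u..v}" for u v
    by (rule integrable_continuous_interval) (rule continuous_on_subset[OF cont], simp)
  note combine = Henstock_Kurzweil_Integration.integral_combine[where f=f]
  have shift: "f \<circ> (+) (of_int m) = f" for m
    using periodic_add_of_int_scaleR[of f 1, OF per] by (simp add: fun_eq_iff add.commute)
  have "integral {a..a+1} f = integral {t..t+1} (f \<circ> (+) (of_int n))"
    unfolding integral_shift_Icc_real t_def by simp
  also have "\<dots> = integral {t..1} f + integral {1..t+1} f"
    unfolding shift using combine[where a=t and c=1 and b="t+1"] t int by simp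
  also have "integral {1..t+1} f = integral {0..t} f"
    using integral_shift_Icc_real[of 0 t f 1] shift[of 1] by (simp add: add.commute)
  also have "integral {t..1} f + integral {0..t} f = integral {0..1} f"
    using combine[where a=0 and c=t and b=1] t int by (simp add: add.commute)
  finally show ?thesis .
qed

lemma integral_periodic_centered:
  fixes f :: "real \<Rightarrow> 'a::banach"
  assumes "continuous_on UNIV f" and "\<And>x. f (x + 1) = f x"
  shows "integral {0..1} f = integral {c - 1/2..c + 1/2} f"
proof -
  have "c - 1/2 + 1 = c + 1/2" by simp
  then show ?thesis using integral_periodic_shift[OF assms, of "c - 1/2"] by (simp add: add.commute)
qed

lemma has_integral_inverse_square_plus_square:
  fixes c e :: real
  assumes "0 < e"
  shows "((\<lambda>r. 1 / ((c - r)^2 + e^2)) has_integral 2 * arctan (1 / (2 * e)) / e) {c - 1/2..c + 1/2}"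
proof -
  define F where "F r = - arctan ((c - r) / e) / e" for r
  have "(F has_real_derivative 1 / ((c - r)^2 + e^2)) (at r)" for r
  proof -
    have "(F has_real_derivative inverse (1 + ((c - r) / e)\<^sup>2) * (1 / e) / e) (at r)"
      unfolding F_def using assms by (auto intro!: derivative_eq_intros)
    moreover have "1 + ((c - r) / e)\<^sup>2 = ((c - r)^2 + e^2) / e^2"
      using assms by (simp add: power_divide field_simps)
    then have "inverse (1 + ((c - r) / e)\<^sup>2) * (1 / e) / e = 1 / ((c - r)^2 + e^2)"
      using assms by (simp add: power2_eq_square)
    ultimately show ?thesis by simp
  qed
  then have "((\<lambda>r. 1 / ((c - r)^2 + e^2)) has_integral F (c + 1/2) - F (c - 1/2))
      {c - 1/2..c + 1/2}"
    by (intro fundamental_theorem_of_calculus)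
       (auto simp: has_real_derivative_iff_has_vector_derivative[symmetric]
         intro: has_field_derivative_at_within)
  moreover have "F (c + 1/2) - F (c - 1/2) = 2 * arctan (1 / (2 * e)) / e"
    unfolding F_def by (simp add: arctan_minus field_simps)
  ultimately show ?thesis by simp
qed

lemma norm_integral_le_inverse_square_plus_square:
  fixes f :: "real \<Rightarrow> 'a::euclidean_space" and e A B :: real
  assumes "0 < e" "0 \<le> B" and f: "f integrable_on {c - 1/2..c + 1/2}"
    and bound: "\<And>r. r \<in> {c - 1/2..c + 1/2} \<Longrightarrow> norm (f r) \<le> A + B / ((c - r)^2 + e^2)"
  shows "norm (integral {c - 1/2..c + 1/2} f) \<le> A + B * pi / e"
proof -
  have h: "((\<lambda>r. A + B / ((c - r)^2 + e^2)) has_integral A + B * (2 * arctan (1 / (2 * e)) / e))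
      {c - 1/2..c + 1/2}"
    using has_integral_const_real[of A "c - 1/2" "c + 1/2"]
      has_integral_mult_right[OF has_integral_inverse_square_plus_square[OF assms(1)], of B c]
    by (auto dest: has_integral_add)
  have "norm (integral {c - 1/2..c + 1/2} f)
      \<le> integral {c - 1/2..c + 1/2} (\<lambda>r. A + B / ((c - r)^2 + e^2))"
    using h by (intro integral_norm_bound_integral[OF f _ bound]) auto
  also have "\<dots> = A + B * (2 * arctan (1 / (2 * e)) / e)"
    using h by (rule integral_unique)
  also have "\<dots> \<le> A + B * pi / e"
    using arctan_ubound[of "1 / (2 * e)"] assms(1,2)
    by (auto intro!: mult_left_mono divide_right_mono)
  finally show ?thesis .
qed

lemma abs_mult_three_halves_bound_le:
  fixes s e M :: real
  assumes "\<bar>s\<bar> \<le> 1" "0 < e" "0 \<le> M"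
  defines "w \<equiv> s^2 + e^2"
  shows "\<bar>s\<bar> * (M + 1 / (w * sqrt w)) \<le> M + 1 / w"
proof -
  have w: "0 < w" unfolding w_def using assms(2) by (simp add: add_nonneg_pos)
  have "\<bar>s\<bar> * (1 / (w * sqrt w)) \<le> sqrt w * (1 / (w * sqrt w))"
    using w by (intro mult_right_mono) (auto simp: w_def real_le_rsqrt)
  also have "\<dots> = 1 / w" using w by (simp add: field_simps)
  finally show ?thesis
    using assms(1,3) mult_left_le_one_le[of M "\<bar>s\<bar>"] by (simp add: distrib_left)
qed

lemma inverse_three_halves_le:
  fixes s e :: real
  assumes "0 < e"
  defines "w \<equiv> s^2 + e^2"
  shows "1 / (w * sqrt w) \<le> (1 / e) * (1 / w)"
proof -
  have w: "0 < w" unfolding w_def using assms by (simp add: add_nonneg_pos)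
  have "e \<le> sqrt w" unfolding w_def by (rule real_le_rsqrt) simp
  then show ?thesis using w assms by (simp add: frac_le mult.commute)
qed

lemma bound_le_uniform_constant:
  fixes \<delta> \<eta> M :: real
  assumes "0 < \<delta>" "\<delta> \<le> 1" "0 \<le> \<eta>" "0 \<le> M"
  shows "2 * \<eta> * M + 2 * \<eta> * pi / \<delta> \<le> (2 * M + 8) * \<eta> / \<delta>"
proof -
  have "\<eta> * M * \<delta> \<le> \<eta> * M" using assms by (simp add: mult_right_le_one_le)
  moreover have "\<eta> * pi \<le> \<eta> * 4" using assms pi_less_4 by (simp add: mult_left_mono)
  moreover have "(2 * \<eta> * M + 2 * \<eta> * pi / \<delta>) * \<delta> = 2 * (\<eta> * M * \<delta>) + 2 * (\<eta> * pi)"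
    using assms(1) by (simp add: field_simps)
  moreover have "(2 * M + 8) * \<eta> = 2 * (\<eta> * M) + 8 * \<eta>"
    by (simp add: algebra_simps)
  ultimately have "(2 * \<eta> * M + 2 * \<eta> * pi / \<delta>) * \<delta> \<le> (2 * M + 8) * \<eta>"
    by linarith
  then show ?thesis using assms(1) by (simp add: pos_le_divide_eq)
qed

lemma smooth1_has_real_derivative:
  assumes "smooth1 f"
  shows "(f has_real_derivative deriv f x) (at x)"
  using assms by cases (simp add: DERIV_deriv_iff_real_differentiable)

lemma smooth1_continuous_deriv:
  assumes "smooth1 f"
  shows "continuous_on UNIV (deriv f)"
proof -
  have "smooth1 (deriv f)" using assms by cases
  then have "\<forall>x. deriv f differentiable at x" by cases
  then show ?thesis
    by (simp add: continuous_at_imp_continuous_on differentiable_imp_continuous_within)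
qed

lemma smooth3_differentiable: "smooth3 f \<Longrightarrow> f differentiable at x"
  by (erule smooth3.cases) simp

lemma smooth3_continuous_partial:
  assumes "smooth3 f"
  shows "continuous_on UNIV (\<lambda>x. frechet_derivative f (at x) (axis i 1))"
proof -
  have "smooth3 (\<lambda>x. frechet_derivative f (at x) (axis i 1))" using assms by cases simp
  then have "\<forall>x. (\<lambda>x. frechet_derivative f (at x) (axis i 1)) differentiable at x" by cases
  then show ?thesis
    by (simp add: continuous_at_imp_continuous_on differentiable_imp_continuous_within)
qed

lemma continuous_Ints_valued_imp_constant:
  fixes f :: "'a::topological_space \<Rightarrow> real"
  assumes "connected S" "continuous_on S f" "\<And>x. x \<in> S \<Longrightarrow> f x \<in> \<int>"
  obtains m :: int where "\<And>x. x \<in> S \<Longrightarrow> f x = of_int m"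
proof (cases "S = {}")
  case False
  have "f constant_on S"
  proof (rule continuous_discrete_range_constant[OF assms(1,2)])
    fix x assume "x \<in> S"
    show "\<exists>e>0. \<forall>y. y \<in> S \<and> f y \<noteq> f x \<longrightarrow> e \<le> norm (f y - f x)"
      using assms(3) \<open>x \<in> S\<close> by (intro exI[of _ 1]) (auto intro!: Ints_nonzero_abs_ge1)
  qed
  then obtain c where c: "\<And>x. x \<in> S \<Longrightarrow> f x = c" unfolding constant_on_def by blast
  from False obtain x where "x \<in> S" by blast
  then have "c \<in> \<int>" using assms(3) c by force
  then show ?thesis using c that by (metis Ints_cases)
qed (use that in blast)

lemma deriv_periodic_of_winding:
  assumes "\<And>x. (f has_real_derivative deriv f x) (at x)" and "\<And>x. f (x + 1) = f x + c"
  shows "deriv f (x + 1) = deriv f x"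
proof (rule DERIV_unique)
  show "((\<lambda>x. f (x + 1)) has_real_derivative deriv f (x + 1)) (at x)"
    using assms(1)[of "x + 1"] DERIV_shift by blast
  show "((\<lambda>x. f (x + 1)) has_real_derivative deriv f x) (at x)"
    unfolding assms(2) using assms(1)[of x] by (auto intro!: derivative_eq_intros)
qed

lemma bdd_above_abs_periodic:
  fixes g :: "real \<Rightarrow> real"
  assumes "continuous_on UNIV g" and "\<And>x. g (x + 1) = g x"
  shows "bdd_above (range (\<lambda>x. \<bar>g x\<bar>))"
proof -
  have "range g = g ` {0..1}"
  proof (intro equalityI subsetI)
    fix y assume "y \<in> range g"
    then obtain x where "y = g x" by blast
    moreover have "g x = g (x - of_int \<lfloor>x\<rfloor>)"
      using periodic_add_of_int_scaleR[of g 1 "x - of_int \<lfloor>x\<rfloor>" "\<lfloor>x\<rfloor>", OF assms(2)] by simp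
    moreover have "0 \<le> x - of_int \<lfloor>x\<rfloor>" "x - of_int \<lfloor>x\<rfloor> \<le> 1"
      using of_int_floor_le[of x] real_of_int_floor_add_one_gt[of x] by linarith+
    ultimately show "y \<in> g ` {0..1}" by auto
  qed auto
  moreover have "bounded (g ` {0..1})"
    by (intro compact_imp_bounded compact_continuous_image continuous_on_subset[OF assms(1)]) auto
  ultimately obtain B where "\<forall>y\<in>range g. norm y \<le> B" unfolding bounded_iff by auto
  then show ?thesis by (intro bdd_aboveI[of _ B]) auto
qed

lemma powr_three_halves: "0 < u \<Longrightarrow> u powr (3/2) = u * sqrt u"
proof -
  assume "0 < u"
  have "u powr (3/2) = u powr (1 + 1/2)" by simp
  also have "\<dots> = u powr 1 * u powr (1/2)" by (rule powr_add)
  finally show ?thesis using \<open>0 < u\<close> by (simp add: powr_half_sqrt)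
qed

lemma bs_main_has_derivative:
  fixes y :: "real^3"
  assumes "0 < e"
  defines "u \<equiv> y \<bullet> y + e ^ 2"
  shows "(bs_main e has_derivative (\<lambda>h. (1 / (4 * pi * u powr (3/2))) *\<^sub>R h
      - (3 * (y \<bullet> h) / (4 * pi * u powr (3/2) * u)) *\<^sub>R y)) (at y)"
proof -
  have u: "0 < y \<bullet> y + e ^ 2" using assms by (simp add: add_nonneg_pos)
  have "bs_main e = (\<lambda>y. (1 / (4 * pi * (y \<bullet> y + e ^ 2) powr (3/2))) *\<^sub>R y)"
    by (auto simp: bs_main_def power2_norm_eq_inner fun_eq_iff)
  then show ?thesis unfolding u_def
    apply (simp only:)
    apply (rule derivative_eq_intros refl | simp only: UNIV_I)+
    using u apply simp
    apply (rule derivative_eq_intros refl has_derivative_ident | simp only: UNIV_I)+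
    using u apply (auto simp: fun_eq_iff inner_commute field_simps)
    done
qed

lemma norm_bs_main_le:
  fixes z :: "real^3"
  assumes "0 < e"
  shows "norm (bs_main e z) \<le> 1 / ((z$3)^2 + e^2)"
proof -
  define u where "u = (norm z)^2 + e^2"
  have w0: "0 < (z$3)^2 + e^2" using assms by (simp add: add_nonneg_pos)
  have wu: "(z$3)^2 + e^2 \<le> u" unfolding u_def
    using component_le_norm_cart[of z 3] by (simp add: abs_le_square_iff[symmetric])
  have u0: "0 < u" using w0 wu by linarith
  have "norm (bs_main e z) = norm z / (4 * pi * (u * sqrt u))"
    unfolding bs_main_def u_def[symmetric] powr_three_halves[OF u0] using u0 by simp
  also have "\<dots> \<le> sqrt u / (4 * pi * (u * sqrt u))"
    using u0 by (intro divide_right_mono) (auto simp: u_def real_le_rsqrt)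
  also have "\<dots> = 1 / (4 * pi * u)" using u0 by (simp add: field_simps)
  also have "\<dots> \<le> 1 / ((z$3)^2 + e^2)"
  proof -
    have "1 * u \<le> 4 * pi * u" using u0 pi_gt3 by (intro mult_right_mono) auto
    then have "(z$3)^2 + e^2 \<le> 4 * pi * u" using wu by linarith
    then show ?thesis using w0 u0 by (intro divide_left_mono) auto
  qed
  finally show ?thesis .
qed

lemma norm_frechet_derivative_bs_main_le:
  fixes y h :: "real^3"
  assumes "0 < e"
  defines "w \<equiv> (y$3)^2 + e^2"
  shows "norm (frechet_derivative (bs_main e) (at y) h) \<le> norm h / (w * sqrt w)"
proof -
  define u where "u = y \<bullet> y + e ^ 2"
  define c where "c = 1 / (4 * pi * (u * sqrt u))"
  have yy: "y \<bullet> y = (norm y)^2" by (simp add: power2_norm_eq_inner)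
  have w0: "0 < w" unfolding w_def using assms by (simp add: add_nonneg_pos)
  have wu: "w \<le> u" unfolding w_def u_def yy
    using component_le_norm_cart[of y 3] by (simp add: abs_le_square_iff[symmetric])
  have u0: "0 < u" using w0 wu by linarith
  have c0: "0 < c" unfolding c_def using u0 by simp
  have "3 * (y \<bullet> h) / (4 * pi * u powr (3/2) * u) = 3 * c * (y \<bullet> h) / u"
    unfolding c_def powr_three_halves[OF u0] by simp
  then have "frechet_derivative (bs_main e) (at y) h = c *\<^sub>R h - (3 * c * (y \<bullet> h) / u) *\<^sub>R y"
    using frechet_derivative_at[OF bs_main_has_derivative[OF assms(1), of y], symmetric]
    unfolding c_def u_def[symmetric] powr_three_halves[OF u0] by simp
  also have "norm \<dots> \<le> c * norm h + 3 * c * \<bar>y \<bullet> h\<bar> * norm y / u"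
    using c0 u0 by (rule_tac order_trans[OF norm_triangle_ineq4]) (simp add: abs_mult)
  also have "\<dots> \<le> c * norm h + 3 * c * (norm y * norm h) * norm y / u"
    using c0 u0 Cauchy_Schwarz_ineq2[of y h]
    by (intro add_left_mono divide_right_mono mult_right_mono mult_left_mono) auto
  also have "\<dots> = c * norm h * (1 + 3 * ((norm y)^2 / u))"
    by (simp add: power2_eq_square algebra_simps)
  also have "\<dots> \<le> c * norm h * 4"
    using c0 u0 by (intro mult_left_mono) (auto simp: u_def yy field_simps)
  also have "\<dots> \<le> norm h / (u * sqrt u)"
    unfolding c_def using u0 pi_gt3 by (simp add: field_simps mult_le_cancel_right1)
  also have "\<dots> \<le> norm h / (w * sqrt w)"
    using w0 wu by (intro divide_left_mono mult_mono) auto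
  finally show ?thesis .
qed

text \<open>\<open>fund_box\<close> is half-open, so \<open>y$3 = 1/2\<close> is moved to \<open>-1/2\<close>: only \<open>\<bar>y$3\<bar>\<close> is preserved.\<close>

lemma fund_box_lattice_representative:
  fixes y :: "real^3"
  assumes "\<bar>y$3\<bar> \<le> 1/2"
  obtains a b c :: int where "y + vector [of_int a, of_int b, of_int c] \<in> fund_box"
    and "\<bar>(y + vector [of_int a, of_int b, of_int c]) $ 3\<bar> = \<bar>y$3\<bar>"
proof -
  define p :: "real^3" where
    "p = vector [of_int (- \<lfloor>y$1 + 1/2\<rfloor>), of_int (- \<lfloor>y$2 + 1/2\<rfloor>), of_int (- \<lfloor>y$3 + 1/2\<rfloor>)]"
  have fl: "- 1/2 \<le> t - \<lfloor>t + 1/2\<rfloor> \<and> t - \<lfloor>t + 1/2\<rfloor> < 1/2" for t :: real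
    using of_int_floor_le[of "t + 1/2"] real_of_int_floor_add_one_gt[of "t + 1/2"] by linarith
  have "y + p \<in> fund_box"
    unfolding fund_box_def p_def using fl by (auto simp: forall_3)
  moreover have "\<bar>(y + p) $ 3\<bar> = \<bar>y$3\<bar>"
  proof (cases "y$3 < 1/2")
    case True
    then have "\<lfloor>y$3 + 1/2\<rfloor> = 0" using assms by (simp add: floor_eq_iff abs_le_iff)
    then show ?thesis by (simp add: p_def)
  next
    case False
    then have "y$3 = 1/2" using assms by (simp add: abs_le_iff)
    then have "\<lfloor>y$3 + 1/2\<rfloor> = 1" by (simp add: floor_eq_iff)
    then have "(y + p) $ 3 = y$3 - 1" by (simp add: p_def)
    then show ?thesis using \<open>y$3 = 1/2\<close> by simp
  qed
  ultimately show ?thesis using that unfolding p_def by blast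
qed

locale periodic_bs_kernel =
  fixes K :: "real^3 \<Rightarrow> real^3" and \<epsilon> M :: real
  assumes differentiable: "\<And>x. K differentiable at x"
    and continuous_partial: "\<And>i. continuous_on UNIV (\<lambda>x. frechet_derivative K (at x) (axis i 1))"
    and periodic: "\<And>x i. K (x + axis i 1) = K x"
    and correction_bound: "\<And>x. x \<in> fund_box \<Longrightarrow> norm (K x - bs_main \<epsilon> x) \<le> M"
    and correction_partial_bound: "\<And>x i. x \<in> fund_box \<Longrightarrow>
      norm (frechet_derivative (\<lambda>y. K y - bs_main \<epsilon> y) (at x) (axis i 1)) \<le> M"
    and reflection: "\<And>x i j. K (refl3 j x) $ i = (if i = j then -1 else 1) * K x $ i"
    and eps_pos: "0 < \<epsilon>"
    and M_nonneg: "0 \<le> M"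
begin

abbreviation partial :: "real^3 \<Rightarrow> 3 \<Rightarrow> real^3" where
  "partial y i \<equiv> frechet_derivative K (at y) (axis i 1)"

lemma has_derivative: "(K has_derivative frechet_derivative K (at y)) (at y)"
  using differentiable frechet_derivative_works by blast

lemma continuous: "continuous_on UNIV K"
  using differentiable
  by (meson differentiable_at_imp_differentiable_on differentiable_imp_continuous_on)

lemma slab_representative:
  assumes "\<bar>y$3\<bar> \<le> 1/2"
  obtains z where "z \<in> fund_box" "K z = K y" "\<bar>z$3\<bar> = \<bar>y$3\<bar>"
    and "frechet_derivative K (at z) = frechet_derivative K (at y)"
proof -
  obtain a b c :: int where z: "y + vector [of_int a, of_int b, of_int c] \<in> fund_box"
    "\<bar>(y + vector [of_int a, of_int b, of_int c]) $ 3\<bar> = \<bar>y$3\<bar>"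
    using fund_box_lattice_representative[OF assms] .
  have Kp: "K (x + vector [of_int a, of_int b, of_int c]) = K x" for x
    by (rule periodic_add_lattice[of K, OF periodic])
  show ?thesis
    by (rule that[OF z(1) Kp z(2) frechet_derivative_periodic[OF Kp differentiable, symmetric]])
qed

lemma norm_le:
  assumes "\<bar>y$3\<bar> \<le> 1/2"
  shows "norm (K y) \<le> M + 1 / ((y$3)^2 + \<epsilon>^2)"
proof -
  obtain z where z: "z \<in> fund_box" "K z = K y" "\<bar>z$3\<bar> = \<bar>y$3\<bar>"
    using slab_representative[OF assms] by metis
  have "norm (K z) \<le> norm (K z - bs_main \<epsilon> z) + norm (bs_main \<epsilon> z)"
    using norm_triangle_ineq[of "K z - bs_main \<epsilon> z" "bs_main \<epsilon> z"] by simp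
  also have "\<dots> \<le> M + 1 / ((z$3)^2 + \<epsilon>^2)"
    using correction_bound[OF z(1)] norm_bs_main_le[OF eps_pos, of z] by linarith
  finally show ?thesis using z(2,3) by (metis power2_abs)
qed

lemma norm_partial_le:
  assumes "\<bar>y$3\<bar> \<le> 1/2"
  defines "w \<equiv> (y$3)^2 + \<epsilon>^2"
  shows "norm (partial y i) \<le> M + 1 / (w * sqrt w)"
proof -
  obtain z where z: "z \<in> fund_box" "\<bar>z$3\<bar> = \<bar>y$3\<bar>"
    "frechet_derivative K (at z) = frechet_derivative K (at y)"
    using slab_representative[OF assms(1)] by metis
  have bs: "bs_main \<epsilon> differentiable at z"
    using bs_main_has_derivative[OF eps_pos] by (auto simp: differentiable_def)
  have "partial z i =
      frechet_derivative (\<lambda>y. K y - bs_main \<epsilon> y) (at z) (axis i 1)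
      + frechet_derivative (bs_main \<epsilon>) (at z) (axis i 1)"
    using frechet_derivative_diff[OF differentiable bs] by simp
  then have "norm (partial z i) \<le>
      norm (frechet_derivative (\<lambda>y. K y - bs_main \<epsilon> y) (at z) (axis i 1))
      + norm (frechet_derivative (bs_main \<epsilon>) (at z) (axis i 1))"
    by (simp add: norm_triangle_ineq)
  also have "\<dots> \<le> M + norm (axis i (1::real) :: real^3) /
      (((z$3)^2 + \<epsilon>^2) * sqrt ((z$3)^2 + \<epsilon>^2))"
    using correction_partial_bound[OF z(1)] norm_frechet_derivative_bs_main_le[OF eps_pos]
    by (rule add_mono)
  finally show ?thesis using z(2,3) unfolding w_def by (metis norm_axis_1 power2_abs)
qed

lemma second_component_on_axis: "K (vector [0, 0, s]) $ 2 = 0"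
proof -
  have "refl3 2 (vector [0, 0, s]) = vector [0, 0, s]"
    by (simp add: refl3_def vec3_eq_iff)
  then show ?thesis using reflection[of 2 "vector [0, 0, s]" 2] by simp
qed

lemma abs_second_component_le:
  assumes "\<bar>s\<bar> \<le> 1/2"
  defines "w \<equiv> s^2 + \<epsilon>^2"
  shows "\<bar>K (vector [0, t, s]) $ 2\<bar> \<le> \<bar>t\<bar> * (M + 1 / (w * sqrt w))"
proof -
  define B where "B = M + 1 / (w * sqrt w)"
  define p :: "real \<Rightarrow> real^3" where "p \<tau> = \<tau> *\<^sub>R axis 2 1 + s *\<^sub>R axis 3 1" for \<tau>
  define D where "D \<tau> = partial (p \<tau>) 2" for \<tau>
  have "((K \<circ> p) has_derivative (\<lambda>h. h *\<^sub>R D \<tau>)) (at \<tau>)" for \<tau>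
  proof -
    have "(p has_derivative (\<lambda>h. h *\<^sub>R axis 2 1)) (at \<tau>)"
      unfolding p_def by (auto intro!: derivative_eq_intros)
    from has_derivative_compose[OF this has_derivative] show ?thesis
      using linear_cmul[OF linear_frechet_derivative[OF differentiable]] by (simp add: o_def D_def)
  qed
  moreover have "onorm (\<lambda>h. h *\<^sub>R D \<tau>) \<le> B" for \<tau>
  proof -
    have "\<bar>p \<tau> $ 3\<bar> \<le> 1/2" using assms(1) by (simp add: p_def axis_def)
    then have "norm (D \<tau>) \<le> B"
      using norm_partial_le[of "p \<tau>" 2] by (simp add: B_def D_def w_def p_def axis_def)
    then show ?thesis
      by (intro onorm_le) (metis abs_ge_zero mult.commute mult_right_mono norm_scaleR real_norm_def)
  qed
  ultimately have "norm ((K \<circ> p) t - (K \<circ> p) 0) \<le> B * norm (t - 0)"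
    by (intro differentiable_bound[OF convex_UNIV, of "K \<circ> p" "\<lambda>\<tau> h. h *\<^sub>R D \<tau>"])
      (auto intro: has_derivative_at_withinI)
  moreover have "(K \<circ> p) t = K (vector [0, t, s])" "(K \<circ> p) 0 = K (vector [0, 0, s])"
    by (simp_all add: p_def vector3_eq_axis)
  ultimately have "norm (K (vector [0, t, s]) - K (vector [0, 0, s])) \<le> \<bar>t\<bar> * B"
    by (simp add: mult.commute)
  then show ?thesis
    using component_le_norm_cart[of "K (vector [0, t, s]) - K (vector [0, 0, s])" 2]
      second_component_on_axis[of s] unfolding B_def by simp
qed

end

locale periodic_bs_kernel_curve = periodic_bs_kernel +
  fixes \<alpha> :: "real \<Rightarrow> real" and \<eta> :: real and m :: int
  assumes alpha_has_derivative: "\<And>r. (\<alpha> has_real_derivative deriv \<alpha> r) (at r)"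
    and deriv_alpha_continuous: "continuous_on UNIV (deriv \<alpha>)"
    and alpha_winding: "\<And>r. \<alpha> (r + 1) = \<alpha> r + of_int m"
    and abs_deriv_alpha_le: "\<And>r. \<bar>deriv \<alpha> r\<bar> \<le> \<eta>"
begin

abbreviation tangent :: "real \<Rightarrow> real^3" where
  "tangent r \<equiv> vector [0, deriv \<alpha> r, 1]"

definition velocity :: "real^3 \<Rightarrow> real^3" where
  "velocity x = integral {0..1} (\<lambda>r. cross3 (K (x - gamma0 \<alpha> r)) (tangent r))"

lemma eta_nonneg: "0 \<le> \<eta>"
  using abs_deriv_alpha_le[of 0] by linarith

lemma gamma0_eq: "gamma0 \<alpha> r = \<alpha> r *\<^sub>R axis 2 1 + r *\<^sub>R axis 3 1"
  unfolding gamma0_def by (simp add: vector3_eq_axis)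

lemma tangent_eq: "tangent r = deriv \<alpha> r *\<^sub>R axis 2 1 + axis 3 1"
  by (simp add: vector3_eq_axis)

lemma gamma0_has_vector_derivative: "(gamma0 \<alpha> has_vector_derivative tangent r) (at r)"
  unfolding gamma0_eq[abs_def] tangent_eq
  using alpha_has_derivative[of r] by (auto intro!: derivative_eq_intros)

lemma continuous_gamma0: "continuous_on UNIV (gamma0 \<alpha>)"
  using gamma0_has_vector_derivative
  by (meson continuous_at_imp_continuous_on has_vector_derivative_continuous)

lemma continuous_tangent: "continuous_on UNIV tangent"
  unfolding tangent_eq by (intro continuous_intros deriv_alpha_continuous)

lemma deriv_alpha_periodic: "deriv \<alpha> (r + 1) = deriv \<alpha> r"
  using deriv_periodic_of_winding[of \<alpha>, OF alpha_has_derivative alpha_winding] .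

lemma kernel_periodic_along_curve:
  "K (x - gamma0 \<alpha> (r + 1)) = K (x - gamma0 \<alpha> r)"
  "frechet_derivative K (at (x - gamma0 \<alpha> (r + 1))) = frechet_derivative K (at (x - gamma0 \<alpha> r))"
proof -
  have Kp: "K (y + vector [of_int 0, of_int m, of_int 1]) = K y" for y
    by (rule periodic_add_lattice[of K, OF periodic])
  have eq: "x - gamma0 \<alpha> (r + 1) + vector [of_int 0, of_int m, of_int 1] = x - gamma0 \<alpha> r"
    unfolding gamma0_def by (simp add: vec3_eq_iff alpha_winding)
  show "K (x - gamma0 \<alpha> (r + 1)) = K (x - gamma0 \<alpha> r)"
    using Kp[of "x - gamma0 \<alpha> (r + 1)"] unfolding eq by (rule sym)
  show "frechet_derivative K (at (x - gamma0 \<alpha> (r + 1))) =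
      frechet_derivative K (at (x - gamma0 \<alpha> r))"
    using frechet_derivative_periodic[OF Kp differentiable, where y = "x - gamma0 \<alpha> (r + 1)"]
    unfolding eq .
qed

lemma alpha_lipschitz: "\<bar>\<alpha> a - \<alpha> b\<bar> \<le> \<eta> * \<bar>a - b\<bar>"
  using field_differentiable_bound[OF convex_UNIV, of \<alpha> "deriv \<alpha>" \<eta> a b]
    alpha_has_derivative abs_deriv_alpha_le by (auto intro: has_field_derivative_at_within)

lemma continuous_integrand: "continuous_on UNIV (\<lambda>r. cross3 (K (x - gamma0 \<alpha> r)) (tangent r))"
  by (intro continuous_on_cross continuous_on_compose2[OF continuous] continuous_intros
      continuous_gamma0 continuous_tangent) auto

lemma continuous_partial_integrand:
  "continuous_on UNIV (\<lambda>r. cross3 (partial (x - gamma0 \<alpha> r) i) (tangent r))"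
  by (intro continuous_on_cross continuous_on_compose2[OF continuous_partial] continuous_intros
      continuous_gamma0 continuous_tangent) auto

lemma abs_first_component_integrand_le:
  assumes "\<bar>r0 - r\<bar> \<le> 1/2"
  shows "\<bar>cross3 (K (gamma0 \<alpha> r0 - gamma0 \<alpha> r)) (tangent r) $ 1\<bar>
    \<le> 2 * \<eta> * M + 2 * \<eta> / ((r0 - r)^2 + \<epsilon>^2)"
proof -
  define s where "s = r0 - r"
  define w where "w = s^2 + \<epsilon>^2"
  define y where "y = gamma0 \<alpha> r0 - gamma0 \<alpha> r"
  have s: "\<bar>s\<bar> \<le> 1/2" using assms unfolding s_def .
  have y: "y = vector [0, \<alpha> r0 - \<alpha> r, s]"
    unfolding y_def s_def gamma0_def by (simp add: vec3_eq_iff)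
  have B: "0 \<le> M + 1 / (w * sqrt w)"
    using M_nonneg by (simp add: w_def)
  have "\<bar>K y $ 2\<bar> \<le> \<bar>\<alpha> r0 - \<alpha> r\<bar> * (M + 1 / (w * sqrt w))"
    using abs_second_component_le[OF s] unfolding y w_def .
  also have "\<dots> \<le> \<eta> * \<bar>s\<bar> * (M + 1 / (w * sqrt w))"
    using alpha_lipschitz[of r0 r] B unfolding s_def by (rule mult_right_mono)
  also have "\<dots> \<le> \<eta> * (M + 1 / w)"
    unfolding mult.assoc w_def using s eps_pos M_nonneg eta_nonneg
    by (intro mult_left_mono abs_mult_three_halves_bound_le) auto
  finally have k2: "\<bar>K y $ 2\<bar> \<le> \<eta> * (M + 1 / w)" .
  have "\<bar>K y $ 3\<bar> \<le> M + 1 / w"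
    using component_le_norm_cart[of "K y" 3] norm_le[of y] s unfolding y w_def by simp
  then have k3: "\<bar>K y $ 3 * deriv \<alpha> r\<bar> \<le> \<eta> * (M + 1 / w)"
    using abs_deriv_alpha_le[of r] by (simp add: abs_mult mult.commute mult_mono)
  have "cross3 (K y) (tangent r) $ 1 = K y $ 2 - K y $ 3 * deriv \<alpha> r"
    by (simp add: cross3_def)
  then have "\<bar>cross3 (K y) (tangent r) $ 1\<bar> \<le> \<bar>K y $ 2\<bar> + \<bar>K y $ 3 * deriv \<alpha> r\<bar>"
    by (metis abs_triangle_ineq4)
  also have "\<dots> \<le> 2 * (\<eta> * (M + 1 / w))"
    using k2 k3 by linarith
  also have "\<dots> = 2 * \<eta> * M + 2 * \<eta> / w"
    by (simp add: algebra_simps)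
  finally show ?thesis unfolding y_def w_def s_def .
qed

lemma abs_velocity_first_component_on_curve_le:
  assumes "\<epsilon> \<le> 1"
  shows "\<bar>velocity (gamma0 \<alpha> r0) $ 1\<bar> \<le> (2 * M + 8) * \<eta> / \<epsilon>"
proof -
  let ?F = "\<lambda>r. cross3 (K (gamma0 \<alpha> r0 - gamma0 \<alpha> r)) (tangent r)"
  let ?S = "{r0 - 1/2..r0 + 1/2}"
  have "?F integrable_on ?S"
    by (intro integrable_continuous_interval continuous_on_subset[OF continuous_integrand]) auto
  then have "(\<lambda>r. ?F r $ 1) integrable_on ?S" and "integral ?S ?F $ 1 = integral ?S (\<lambda>r. ?F r $ 1)"
    by (simp_all add: integrable_linear[OF _ bounded_linear_vec_nth, unfolded o_def])
  moreover have "velocity (gamma0 \<alpha> r0) = integral ?S ?F"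
    unfolding velocity_def
    using continuous_integrand kernel_periodic_along_curve(1) deriv_alpha_periodic
    by (intro integral_periodic_centered) auto
  moreover have "norm (integral ?S (\<lambda>r. ?F r $ 1)) \<le> 2 * \<eta> * M + 2 * \<eta> * pi / \<epsilon>"
  proof (rule norm_integral_le_inverse_square_plus_square[OF eps_pos])
    fix r assume "r \<in> ?S"
    then have "\<bar>r0 - r\<bar> \<le> 1/2" unfolding abs_le_iff by auto
    then show "norm (?F r $ 1) \<le> 2 * \<eta> * M + 2 * \<eta> / ((r0 - r)^2 + \<epsilon>^2)"
      using abs_first_component_integrand_le by simp
  qed (use eta_nonneg \<open>(\<lambda>r. ?F r $ 1) integrable_on ?S\<close> in auto)
  ultimately have "\<bar>velocity (gamma0 \<alpha> r0) $ 1\<bar> \<le> 2 * \<eta> * M + 2 * \<eta> * pi / \<epsilon>"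
    by simp
  also have "\<dots> \<le> (2 * M + 8) * \<eta> / \<epsilon>"
    by (rule bound_le_uniform_constant[OF eps_pos assms eta_nonneg M_nonneg])
  finally show ?thesis .
qed

lemma velocity_partial3_has_vector_derivative:
  "((\<lambda>t. velocity (x + t *\<^sub>R axis 3 1)) has_vector_derivative
     integral {0..1} (\<lambda>r. cross3 (partial (x - gamma0 \<alpha> r) 3) (tangent r))) (at 0)"
proof -
  let ?f = "\<lambda>t r. cross3 (K (x + t *\<^sub>R axis 3 1 - gamma0 \<alpha> r)) (tangent r)"
  let ?fx = "\<lambda>t r. cross3 (partial (x + t *\<^sub>R axis 3 1 - gamma0 \<alpha> r) 3) (tangent r)"
  have "((\<lambda>t. integral (cbox 0 1) (?f t)) has_vector_derivative integral (cbox 0 1) (?fx 0))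
      (at 0 within UNIV)"
  proof (rule leibniz_rule_vector_derivative[where U=UNIV and a=0 and b=1 and f="?f" and fx="?fx"])
    fix t r :: real
    have "((\<lambda>t. x + t *\<^sub>R axis 3 1 - gamma0 \<alpha> r) has_vector_derivative axis 3 1) (at t within UNIV)"
      by (auto intro!: derivative_eq_intros)
    from vector_derivative_diff_chain_within[OF this has_derivative_at_withinI[OF has_derivative]]
    show "((\<lambda>t. ?f t r) has_vector_derivative ?fx t r) (at t within UNIV)"
      using bounded_linear.has_vector_derivative[OF bounded_linear_cross3_left] by (simp add: o_def)
  next
    fix t :: real
    show "?f t integrable_on cbox 0 1"
      unfolding cbox_interval
      by (intro integrable_continuous_interval continuous_on_subset[OF continuous_integrand]) auto
  next
    have fx: "continuous_on UNIV (\<lambda>p. ?fx (fst p) (snd p))"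
      by (intro continuous_on_cross continuous_on_compose2[OF continuous_partial]
          continuous_on_compose2[OF continuous_gamma0] continuous_on_compose2[OF continuous_tangent]
          continuous_intros) auto
    show "continuous_on (UNIV \<times> cbox 0 1) (\<lambda>(t, r). ?fx t r)"
      using continuous_on_subset[OF fx, of "UNIV \<times> cbox 0 1"] by (simp add: case_prod_beta')
  qed auto
  then show ?thesis by (simp add: velocity_def cbox_interval)
qed

lemma kernel_along_curve_has_vector_derivative:
  "((\<lambda>r. K (x - gamma0 \<alpha> r)) has_vector_derivative
     - (deriv \<alpha> r *\<^sub>R partial (x - gamma0 \<alpha> r) 2 + partial (x - gamma0 \<alpha> r) 3)) (at r)"
proof -
  have "((\<lambda>r. x - gamma0 \<alpha> r) has_vector_derivative - tangent r) (at r)"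
    using has_vector_derivative_diff[OF has_vector_derivative_const gamma0_has_vector_derivative]
    by simp
  from vector_derivative_diff_chain_within[OF this has_derivative_at_withinI[OF has_derivative]]
  have "((\<lambda>r. K (x - gamma0 \<alpha> r)) has_vector_derivative
      frechet_derivative K (at (x - gamma0 \<alpha> r)) (- tangent r)) (at r)"
    by (simp add: o_def)
  moreover have "frechet_derivative K (at (x - gamma0 \<alpha> r)) (- tangent r) =
      - (deriv \<alpha> r *\<^sub>R partial (x - gamma0 \<alpha> r) 2 + partial (x - gamma0 \<alpha> r) 3)"
    using linear_frechet_derivative[OF differentiable, of "x - gamma0 \<alpha> r"]
    by (simp only: tangent_eq linear_neg linear_add linear_cmul)
  ultimately show ?thesis by simp
qed

lemma has_integral_kernel_derivative_along_curve:
  "((\<lambda>r. deriv \<alpha> r *\<^sub>R partial (x - gamma0 \<alpha> r) 2 + partial (x - gamma0 \<alpha> r) 3) has_integral 0)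
     {c - 1/2..c + 1/2}"
proof -
  have "K (x - gamma0 \<alpha> (c + 1/2)) - K (x - gamma0 \<alpha> (c - 1/2)) = 0"
    using kernel_periodic_along_curve(1)[of x "c - 1/2"] by (simp add: add.commute)
  moreover have "((\<lambda>r. - (deriv \<alpha> r *\<^sub>R partial (x - gamma0 \<alpha> r) 2 + partial (x - gamma0 \<alpha> r) 3))
      has_integral K (x - gamma0 \<alpha> (c + 1/2)) - K (x - gamma0 \<alpha> (c - 1/2))) {c - 1/2..c + 1/2}"
    using kernel_along_curve_has_vector_derivative
    by (intro fundamental_theorem_of_calculus) (auto intro: has_vector_derivative_at_within)
  ultimately show ?thesis
    unfolding has_integral_neg_iff by simp
qed

lemma norm_rearranged_partial3_integrand_le:
  assumes "\<bar>x$3 - r\<bar> \<le> 1/2"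
  shows "norm (deriv \<alpha> r *\<^sub>R (cross3 (partial (x - gamma0 \<alpha> r) 3) (axis 2 1)
      - cross3 (partial (x - gamma0 \<alpha> r) 2) (axis 3 1)))
    \<le> 2 * \<eta> * M + (2 * \<eta> / \<epsilon>) / ((x$3 - r)^2 + \<epsilon>^2)"
proof -
  define y where "y = x - gamma0 \<alpha> r"
  define w where "w = (x$3 - r)^2 + \<epsilon>^2"
  have y3: "y$3 = x$3 - r" unfolding y_def gamma0_def by simp
  have partial: "norm (cross3 (partial y i) (axis j 1)) \<le> M + (1 / \<epsilon>) * (1 / w)" for i j
  proof -
    have "norm (cross3 (partial y i) (axis j 1)) \<le> norm (partial y i)"
      using norm_cross3_le[of "partial y i" "axis j 1"] by (simp add: norm_axis_1)
    also have "\<dots> \<le> M + 1 / (w * sqrt w)"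
      using norm_partial_le[of y i] assms unfolding y3 w_def by simp
    also have "\<dots> \<le> M + (1 / \<epsilon>) * (1 / w)"
      using inverse_three_halves_le[OF eps_pos] unfolding w_def by simp
    finally show ?thesis .
  qed
  have "norm (deriv \<alpha> r *\<^sub>R (cross3 (partial y 3) (axis 2 1) - cross3 (partial y 2) (axis 3 1)))
      = \<bar>deriv \<alpha> r\<bar> * norm (cross3 (partial y 3) (axis 2 1) - cross3 (partial y 2) (axis 3 1))"
    by simp
  also have "\<dots> \<le>
      \<eta> * (norm (cross3 (partial y 3) (axis 2 1)) + norm (cross3 (partial y 2) (axis 3 1)))"
    using abs_deriv_alpha_le[of r] eta_nonneg by (intro mult_mono norm_triangle_ineq4) auto
  also have "\<dots> \<le> \<eta> * ((M + (1 / \<epsilon>) * (1 / w)) + (M + (1 / \<epsilon>) * (1 / w)))"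
    using partial[of 3 2] partial[of 2 3] eta_nonneg by (intro mult_left_mono add_mono)
  also have "\<dots> = 2 * \<eta> * M + (2 * \<eta> / \<epsilon>) / w"
    by (simp add: algebra_simps)
  finally show ?thesis unfolding y_def w_def .
qed

lemma norm_partial3_velocity_le:
  assumes "\<epsilon> \<le> 1"
  shows "norm (integral {0..1} (\<lambda>r. cross3 (partial (x - gamma0 \<alpha> r) 3) (tangent r)))
     \<le> (2 * M + 8) * \<eta> / \<epsilon>^2"
proof -
  let ?H = "\<lambda>r. cross3 (partial (x - gamma0 \<alpha> r) 3) (tangent r)"
  let ?C = "\<lambda>r. cross3 (deriv \<alpha> r *\<^sub>R partial (x - gamma0 \<alpha> r) 2 + partial (x - gamma0 \<alpha> r) 3)
      (axis 3 1)"
  let ?S = "{x$3 - 1/2..x$3 + 1/2}"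
  define R where "R r = deriv \<alpha> r *\<^sub>R (cross3 (partial (x - gamma0 \<alpha> r) 3) (axis 2 1)
      - cross3 (partial (x - gamma0 \<alpha> r) 2) (axis 3 1))" for r
  have H: "?H r = R r + ?C r" for r
    unfolding R_def tangent_eq
    by (simp add: cross_add_left cross_add_right cross_mult_left cross_mult_right scaleR_diff_right)
  have "?H integrable_on ?S"
    by (intro integrable_continuous_interval continuous_on_subset[OF continuous_partial_integrand])
      auto
  moreover have "(?C has_integral 0) ?S"
    using has_integral_linear[OF has_integral_kernel_derivative_along_curve
        bounded_linear_cross3_left]
    by (simp add: o_def)
  ultimately have "((\<lambda>r. ?H r - ?C r) has_integral integral ?S ?H - 0) ?S"
    by (intro has_integral_diff integrable_integral)
  then have R: "(R has_integral integral ?S ?H) ?S"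
    unfolding H by simp
  have "integral {0..1} ?H = integral ?S ?H"
    by (rule integral_periodic_centered[OF continuous_partial_integrand])
      (simp add: kernel_periodic_along_curve(2) deriv_alpha_periodic)
  also have "\<dots> = integral ?S R"
    using integral_unique[OF R] by simp
  also have "norm \<dots> \<le> 2 * \<eta> * M + (2 * \<eta> / \<epsilon>) * pi / \<epsilon>"
  proof (rule norm_integral_le_inverse_square_plus_square[OF eps_pos])
    fix r assume "r \<in> ?S"
    then have "\<bar>x$3 - r\<bar> \<le> 1/2" unfolding abs_le_iff by auto
    then show "norm (R r) \<le> 2 * \<eta> * M + 2 * \<eta> / \<epsilon> / ((x$3 - r)^2 + \<epsilon>^2)"
      unfolding R_def by (rule norm_rearranged_partial3_integrand_le)
  qed (use R eta_nonneg eps_pos in auto)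
  finally have "norm (integral {0..1} ?H) \<le> 2 * \<eta> * M + 2 * \<eta> * pi / \<epsilon>^2"
    by (simp add: power2_eq_square)
  also have "\<dots> \<le> (2 * M + 8) * \<eta> / \<epsilon>^2"
    using eps_pos assms
    by (intro bound_le_uniform_constant eta_nonneg M_nonneg) (auto simp: power_le_one)
  finally show ?thesis .
qed

end

lemma admissible_kernel_periodic_bs_kernel:
  assumes "admissible_kernel k"
  obtains M where "\<And>\<epsilon>. 0 < \<epsilon> \<Longrightarrow> periodic_bs_kernel (k \<epsilon>) \<epsilon> M"
proof -
  note adm = assms[unfolded admissible_kernel_def]
  obtain M0 where bounds: "\<forall>\<epsilon>>0. \<forall>x\<in>fund_box. norm (k \<epsilon> x - bs_main \<epsilon> x) \<le> M0 \<and>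
      (\<forall>i. norm (frechet_derivative (\<lambda>y. k \<epsilon> y - bs_main \<epsilon> y) (at x) (axis i 1)) \<le> M0)"
    using conjunct1[OF conjunct2[OF conjunct2[OF adm]]] by (rule exE)
  have "periodic_bs_kernel (k \<epsilon>) \<epsilon> (max M0 0)" if \<epsilon>: "0 < \<epsilon>" for \<epsilon>
  proof
    have "smooth3 (k \<epsilon>)" using conjunct1[OF adm] \<epsilon> by simp
    then show "k \<epsilon> differentiable at x"
      and "continuous_on UNIV (\<lambda>x. frechet_derivative (k \<epsilon>) (at x) (axis i 1))" for x i
      by (simp_all add: smooth3_differentiable smooth3_continuous_partial)
    show "k \<epsilon> (x + axis i 1) = k \<epsilon> x" for x i
      using conjunct1[OF conjunct2[OF adm]] \<epsilon> by simp
    show "k \<epsilon> (refl3 j x) $ i = (if i = j then -1 else 1) * k \<epsilon> x $ i" for x i j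
      using conjunct2[OF conjunct2[OF conjunct2[OF adm]]] \<epsilon> by simp
    show "norm (k \<epsilon> x - bs_main \<epsilon> x) \<le> max M0 0"
      and "norm (frechet_derivative (\<lambda>y. k \<epsilon> y - bs_main \<epsilon> y) (at x) (axis i 1)) \<le> max M0 0"
      if "x \<in> fund_box" for x i
      using bounds \<epsilon> that by (simp_all add: le_max_iff_disj)
  qed (use \<epsilon> in auto)
  then show ?thesis using that by blast
qed

lemma periodic_bs_kernel_curveI:
  assumes "periodic_bs_kernel K \<epsilon> M" and "smooth1 \<alpha>" and "\<forall>r. \<alpha> (r + 1) - \<alpha> r \<in> \<int>"
  obtains m where "periodic_bs_kernel_curve K \<epsilon> M \<alpha> (SUP r. \<bar>deriv \<alpha> r\<bar>) m"
proof -
  have d: "\<And>r. (\<alpha> has_real_derivative deriv \<alpha> r) (at r)"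
    using assms(2) by (rule smooth1_has_real_derivative)
  then have "continuous_on UNIV \<alpha>"
    by (intro continuous_at_imp_continuous_on ballI) (use DERIV_isCont in blast)
  then have "continuous_on UNIV (\<lambda>r. \<alpha> (r + 1) - \<alpha> r)"
    by (intro continuous_intros continuous_on_compose2[of UNIV \<alpha> UNIV "\<lambda>r. r + 1"]) auto
  then obtain m where m: "\<And>r. \<alpha> (r + 1) = \<alpha> r + of_int m"
  proof (rule continuous_Ints_valued_imp_constant[OF connected_UNIV])
    show "\<alpha> (r + 1) - \<alpha> r \<in> \<int>" for r using assms(3) by blast
  next
    fix m :: int assume "\<And>r. r \<in> UNIV \<Longrightarrow> \<alpha> (r + 1) - \<alpha> r = of_int m"
    then show ?thesis using that by (simp add: algebra_simps)
  qed
  have "bdd_above (range (\<lambda>r. \<bar>deriv \<alpha> r\<bar>))"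
    using smooth1_continuous_deriv[OF assms(2)] deriv_periodic_of_winding[of \<alpha>, OF d m]
    by (rule bdd_above_abs_periodic)
  then have "\<bar>deriv \<alpha> r\<bar> \<le> (SUP r. \<bar>deriv \<alpha> r\<bar>)" for r
    by (rule cSUP_upper[OF UNIV_I])
  then have "periodic_bs_kernel_curve K \<epsilon> M \<alpha> (SUP r. \<bar>deriv \<alpha> r\<bar>) m"
    using assms(1) d m smooth1_continuous_deriv[OF assms(2)]
    by (simp add: periodic_bs_kernel_curve_def periodic_bs_kernel_curve_axioms_def)
  then show ?thesis by (rule that)
qed

lemma vel0_uniform_bounds:
  fixes k :: "real \<Rightarrow> real^3 \<Rightarrow> real^3"
  assumes kernel: "periodic_bs_kernel (k \<epsilon>) \<epsilon> M" and "\<epsilon> \<le> 1"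
    and \<alpha>: "smooth1 \<alpha>" "\<forall>r. \<alpha> (r + 1) - \<alpha> r \<in> \<int>"
  defines "\<eta> \<equiv> SUP r. \<bar>deriv \<alpha> r\<bar>"
  shows "\<bar>vel0 k \<epsilon> \<Gamma> \<alpha> (gamma0 \<alpha> r) $ 1\<bar> \<le> (2 * M + 8) * \<bar>\<Gamma>\<bar> * \<eta> / \<epsilon>"
    and "\<exists>D. ((\<lambda>t. vel0 k \<epsilon> \<Gamma> \<alpha> (x + t *\<^sub>R axis 3 1)) has_vector_derivative D) (at 0) \<and>
      norm D \<le> (2 * M + 8) * \<bar>\<Gamma>\<bar> * \<eta> / \<epsilon> ^ 2"
proof -
  obtain m where "periodic_bs_kernel_curve (k \<epsilon>) \<epsilon> M \<alpha> \<eta> m"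
    using periodic_bs_kernel_curveI[OF kernel \<alpha>] unfolding \<eta>_def by blast
  then interpret periodic_bs_kernel_curve "k \<epsilon>" \<epsilon> M \<alpha> \<eta> m .
  have vel0: "vel0 k \<epsilon> \<Gamma> \<alpha> y = \<Gamma> *\<^sub>R velocity y" for y
    by (simp add: vel0_def velocity_def)
  show "\<bar>vel0 k \<epsilon> \<Gamma> \<alpha> (gamma0 \<alpha> r) $ 1\<bar> \<le> (2 * M + 8) * \<bar>\<Gamma>\<bar> * \<eta> / \<epsilon>"
    using mult_left_mono[OF abs_velocity_first_component_on_curve_le[OF assms(2)], of "\<bar>\<Gamma>\<bar>"]
    by (simp add: vel0 abs_mult mult_ac)
  let ?D = "integral {0..1} (\<lambda>r. cross3 (partial (x - gamma0 \<alpha> r) 3) (tangent r))"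
  have "((\<lambda>t. vel0 k \<epsilon> \<Gamma> \<alpha> (x + t *\<^sub>R axis 3 1)) has_vector_derivative \<Gamma> *\<^sub>R ?D) (at 0)"
    unfolding vel0
    by (rule bounded_linear.has_vector_derivative[OF bounded_linear_scaleR_right
          velocity_partial3_has_vector_derivative])
  moreover have "norm (\<Gamma> *\<^sub>R ?D) \<le> (2 * M + 8) * \<bar>\<Gamma>\<bar> * \<eta> / \<epsilon> ^ 2"
    using mult_left_mono[OF norm_partial3_velocity_le[OF assms(2)], of "\<bar>\<Gamma>\<bar>"] by (simp add: mult_ac)
  ultimately show "\<exists>D. ((\<lambda>t. vel0 k \<epsilon> \<Gamma> \<alpha> (x + t *\<^sub>R axis 3 1)) has_vector_derivative D) (at 0) \<and>
      norm D \<le> (2 * M + 8) * \<bar>\<Gamma>\<bar> * \<eta> / \<epsilon> ^ 2"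
    by blast
qed

theorem lemma3:
  fixes k :: "real \<Rightarrow> real^3 \<Rightarrow> real^3"
  assumes "admissible_kernel k"
  shows "\<exists>C. \<forall>\<epsilon> \<Gamma> \<alpha>. 0 < \<epsilon> \<and> \<epsilon> \<le> 1 \<and> smooth1 \<alpha> \<and> (\<forall>r. \<alpha> (r + 1) - \<alpha> r \<in> \<int>) \<and>
            (SUP r. \<bar>deriv \<alpha> r\<bar>) \<le> 1 \<longrightarrow>
       (\<forall>r. \<bar>vel0 k \<epsilon> \<Gamma> \<alpha> (gamma0 \<alpha> r) $ 1\<bar> \<le> C * \<bar>\<Gamma>\<bar> * (SUP r. \<bar>deriv \<alpha> r\<bar>) / \<epsilon>) \<and>
       (\<forall>x. \<exists>D. ((\<lambda>t. vel0 k \<epsilon> \<Gamma> \<alpha> (x + t *\<^sub>R axis 3 1)) has_vector_derivative D) (at 0) \<and>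
              norm D \<le> C * \<bar>\<Gamma>\<bar> * (SUP r. \<bar>deriv \<alpha> r\<bar>) / \<epsilon> ^ 2)"
proof -
  obtain M where kernel: "\<And>\<epsilon>. 0 < \<epsilon> \<Longrightarrow> periodic_bs_kernel (k \<epsilon>) \<epsilon> M"
    using admissible_kernel_periodic_bs_kernel[OF assms] by blast
  have "\<bar>vel0 k \<epsilon> \<Gamma> \<alpha> (gamma0 \<alpha> r) $ 1\<bar> \<le> (2 * M + 8) * \<bar>\<Gamma>\<bar> * (SUP r. \<bar>deriv \<alpha> r\<bar>) / \<epsilon>"
    and "\<exists>D. ((\<lambda>t. vel0 k \<epsilon> \<Gamma> \<alpha> (x + t *\<^sub>R axis 3 1)) has_vector_derivative D) (at 0) \<and>
      norm D \<le> (2 * M + 8) * \<bar>\<Gamma>\<bar> * (SUP r. \<bar>deriv \<alpha> r\<bar>) / \<epsilon> ^ 2"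
    if "0 < \<epsilon>" "\<epsilon> \<le> 1" "smooth1 \<alpha>" "\<forall>r. \<alpha> (r + 1) - \<alpha> r \<in> \<int>" for \<epsilon> \<Gamma> \<alpha> r x
    using vel0_uniform_bounds[where k = k, OF kernel[OF that(1)] that(2-4)] by blast+
  then show ?thesis by (intro exI[of _ "2 * M + 8"]) blast
qed

end
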